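(* In the construction described in the context, for every $n \geq 0$ one has $\alpha_{n+1} \circ \Gamma_{n+1,n} = \Gamma_{n+1,n} \circ \alpha_n$ as maps $C_n \to C_{n+1}$. Consequently the $\alpha_n$ induce an automorphism $\alpha$ of $C = \varinjlim C_n$ with $\alpha \circ \Gamma_{\infty,n} = \Gamma_{\infty,n}\circ \alpha_n$ for all $n$.
   Context: Construction. Let $(d(n))_{n\ge 0}$ be natural numbers with $d(0)=1$ and $d(n) > 2^{n-1}$ for $n \ge 1$. Put $l(0)=1$, $l(n) = d(n) + 2^{n-1}$ for $n\ge1$, $r(n) = \prod_{j=0}^n l(j)$, $s(n) = \prod_{j=0}^n d(j)$, and $\kappa = \inf_{n\in\mathbb{N}} s(n)/r(n)$; assume $\kappa > 1/2$ (e.g. $d(n)=10^n$). Let $X_n = (S^2)^{s(n)}$, identified with $X_{n+1} = X_n^{d(n+1)}$, and let $P^{(n)}_j\colon X_{n+1}\to X_n$ ($1\le j\le d(n+1)$) be the $j$-th coordinate projection. Choose points $x_m \in X_m$ ($m\ge 0$) such that for every $n\ge 0$ the set of points $(P^{(n)}_{\nu_1}\circ P^{(n+1)}_{\nu_2}\circ\cdots\circ P^{(m-1)}_{\nu_{m-n}})(x_m)$, over all $m>n$ and all $\nu_j \in \{1,\dots,d(n+j)\}$, is dense in $X_n$. Let $\mathbb{Z}_{2^n} = \mathbb{Z}/2^n\mathbb{Z}$, $\pi_{n,n+1}\colon \mathbb{Z}_{2^{n+1}}\to\mathbb{Z}_{2^n}$ the reduction mod $2^n$. Set $C_n = M_{r(n)}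 \otimes C(X_n \times \mathbb{Z}_{2^n}) \cong C(X_n\times\mathbb{Z}_{2^n}, M_{r(n)})$, identifying $M_{r(n)} = M_{l(1)}\otimes\cdots\otimes M_{l(n)}$. Define $S_{n,1},\dots,S_{n,l(n+1)}\colon X_{n+1}\times\mathbb{Z}_{2^{n+1}} \to X_n\times \mathbb{Z}_{2^n}$ by $S_{n,j}(x,k) = (P^{(n)}_j(x), \pi_{n,n+1}(k))$ for $1\le j\le d(n+1)$, and $S_{n,d(n+1)+1+j}(x,k) = (x_n, j)$ for $j = 0,1,\dots,2^n-1$. Let $\gamma_n\colon C(X_n\times\mathbb{Z}_{2^n}) \to M_{l(n+1)}(C(X_{n+1}\times\mathbb{Z}_{2^{n+1}}))$, $\gamma_n(f) = \operatorname{diag}(f\circ S_{n,1},\dots,f\circ S_{n,l(n+1)})$, and $\Gamma_{n+1,n} = \mathrm{id}_{M_{r(n)}}\otimes\gamma_n\colon C_n\to C_{n+1}$; $\Gamma_{n,m}$ denote the composites and $C = \varinjlim C_n$ with canonical maps $\Gamma_{\infty,m}\colon C_m\to C$. For $n\ge1$ let $v_n\in M_{l(n)}$ be the unitary $v_n = \sum_{j=1}^{d(n)} e_{j,j} + \sum_{j=1}^{2^{n-1}-1} e_{d(n)+j,\,d(n)+j+1} + e_{d(n)+2^{n-1},\,d(n)+1}$ (identity on the first $d(n)$ coordinates, cyclic permutation of the last $2^{n-1}$), let $u_n = v_1\otimes\cdots\otimes v_n \in M_{r(n)}$ ($u_0=1$), and define automorphisms $\alpha_n$ of $C_n$ by $\alpha_n(f)(x,k)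 = u_n f(x, k+1) u_n^*$. *)

theory Defs
  imports "HOL-Analysis.Analysis"
begin

text \<open>Points of X_n = (S^2)^{s(n)} are functions pt = nat => real^3 whose coordinates
  i < s(n) lie on the unit sphere and whose other coordinates are 0.
  Z_{2^n} is represented by {0..<2^n}, addition taken mod 2^n.
  M_{r(n)} = M_{l(1)} (x) ... (x) M_{l(n)} is represented with multi-indices:
  index lists a of length n with 1 <= a!j <= l(j+1); matrices are functions
  nat list => nat list => complex.  An element of C_n is a function
  pt => nat => matrix, considered only on X_n x Z_{2^n} and valid indices.\<close>

type_synonym pt = "nat \<Rightarrow> real^3"
type_synonym mat = "nat list \<Rightarrow> nat list \<Rightarrow> complex"
type_synonym elt = "pt \<Rightarrow> nat \<Rightarrow> mat"

definition lsz :: "(nat \<Rightarrow> nat) \<Rightarrow> nat \<Rightarrow> nat" where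
  "lsz d n = (if n = 0 then 1 else d n + 2 ^ (n - 1))"

definition rsz :: "(nat \<Rightarrow> nat) \<Rightarrow> nat \<Rightarrow> nat" where
  "rsz d n = (\<Prod>j\<le>n. lsz d j)"

definition ssz :: "(nat \<Rightarrow> nat) \<Rightarrow> nat \<Rightarrow> nat" where
  "ssz d n = (\<Prod>j\<le>n. d j)"

definition kappa :: "(nat \<Rightarrow> nat) \<Rightarrow> real" where
  "kappa d = (INF n. real (ssz d n) / real (rsz d n))"

definition Xsp :: "(nat \<Rightarrow> nat) \<Rightarrow> nat \<Rightarrow> pt set" where
  "Xsp d n = {x. (\<forall>i < ssz d n. x i \<in> sphere 0 1) \<and> (\<forall>i. ssz d n \<le> i \<longrightarrow> x i = 0)}"

text \<open>X_{n+1} = X_n^{d(n+1)}: the j-th block (1 <= j <= d(n+1)) consists of the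
  coordinates (j-1) s(n), ..., j s(n) - 1.  proj d n j is P^{(n)}_j.\<close>
definition proj :: "(nat \<Rightarrow> nat) \<Rightarrow> nat \<Rightarrow> nat \<Rightarrow> pt \<Rightarrow> pt" where
  "proj d n j x = (\<lambda>i. if i < ssz d n then x ((j - 1) * ssz d n + i) else 0)"

fun iproj :: "(nat \<Rightarrow> nat) \<Rightarrow> nat \<Rightarrow> (nat \<Rightarrow> nat) \<Rightarrow> nat \<Rightarrow> pt \<Rightarrow> pt" where
  "iproj d n \<nu> 0 x = x"
| "iproj d n \<nu> (Suc k) x = proj d n (\<nu> 1) (iproj d (Suc n) (\<lambda>j. \<nu> (Suc j)) k x)"

definition dense_pts :: "(nat \<Rightarrow> nat) \<Rightarrow> (nat \<Rightarrow> pt) \<Rightarrow> nat \<Rightarrow> pt set" where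
  "dense_pts d xs n = {iproj d n \<nu> (m - n) (xs m) | m \<nu>.
      n < m \<and> (\<forall>j\<in>{1..m - n}. 1 \<le> \<nu> j \<and> \<nu> j \<le> d (n + j))}"

definition idx :: "(nat \<Rightarrow> nat) \<Rightarrow> nat \<Rightarrow> nat list set" where
  "idx d n = {a. length a = n \<and> (\<forall>j<n. 1 \<le> a ! j \<and> a ! j \<le> lsz d (Suc j))}"

text \<open>v_n (entries indexed from 1).\<close>
definition vmat :: "(nat \<Rightarrow> nat) \<Rightarrow> nat \<Rightarrow> nat \<Rightarrow> nat \<Rightarrow> complex" where
  "vmat d n p q =
     (if (1 \<le> p \<and> p \<le> d n \<and> q = p)
       \<or> (d n < p \<and> p < d n + 2 ^ (n - 1) \<and> q = p + 1)
       \<or> (p = d n + 2 ^ (n - 1) \<and> q = d n + 1) then 1 else 0)"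

definition umat :: "(nat \<Rightarrow> nat) \<Rightarrow> nat \<Rightarrow> mat" where
  "umat d n a b = (\<Prod>j<n. vmat d (Suc j) (a ! j) (b ! j))"

definition mmul :: "(nat \<Rightarrow> nat) \<Rightarrow> nat \<Rightarrow> mat \<Rightarrow> mat \<Rightarrow> mat" where
  "mmul d n A B a b = (\<Sum>c\<in>idx d n. A a c * B c b)"

definition madj :: "mat \<Rightarrow> mat" where
  "madj A a b = cnj (A b a)"

definition Cset :: "(nat \<Rightarrow> nat) \<Rightarrow> nat \<Rightarrow> elt set" where
  "Cset d n = {f. \<forall>k < 2 ^ n. \<forall>a\<in>idx d n. \<forall>b\<in>idx d n.
                   continuous_on (Xsp d n) (\<lambda>x. f x k a b)}"

definition eqC :: "(nat \<Rightarrow> nat) \<Rightarrow> nat \<Rightarrow> elt \<Rightarrow> elt \<Rightarrow> bool" where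
  "eqC d n f g = (\<forall>y\<in>Xsp d n. \<forall>k < 2 ^ n. \<forall>a\<in>idx d n. \<forall>b\<in>idx d n. f y k a b = g y k a b)"

definition alph :: "(nat \<Rightarrow> nat) \<Rightarrow> nat \<Rightarrow> elt \<Rightarrow> elt" where
  "alph d n f = (\<lambda>y k. mmul d n (mmul d n (umat d n) (f y ((k + 1) mod 2 ^ n))) (madj (umat d n)))"

definition Smap :: "(nat \<Rightarrow> nat) \<Rightarrow> (nat \<Rightarrow> pt) \<Rightarrow> nat \<Rightarrow> nat \<Rightarrow> pt \<Rightarrow> nat \<Rightarrow> pt \<times> nat" where
  "Smap d xs n j y k =
     (if j \<le> d (Suc n) then (proj d n j y, k mod 2 ^ n) else (xs n, j - d (Suc n) - 1))"

text \<open>Gamma_{n+1,n} = id_{M_{r(n)}} (x) gamma_n, the last tensor factor being M_{l(n+1)}.\<close>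
definition Gam1 :: "(nat \<Rightarrow> nat) \<Rightarrow> (nat \<Rightarrow> pt) \<Rightarrow> nat \<Rightarrow> elt \<Rightarrow> elt" where
  "Gam1 d xs n f = (\<lambda>y k a b.
      if last a = last b
      then f (fst (Smap d xs n (last a) y k)) (snd (Smap d xs n (last a) y k)) (butlast a) (butlast b)
      else 0)"

text \<open>Gam d xs n p = Gamma_{n+p,n}.\<close>
fun Gam :: "(nat \<Rightarrow> nat) \<Rightarrow> (nat \<Rightarrow> pt) \<Rightarrow> nat \<Rightarrow> nat \<Rightarrow> elt \<Rightarrow> elt" where
  "Gam d xs n 0 f = f"
| "Gam d xs n (Suc p) f = Gam1 d xs (n + p) (Gam d xs n p f)"

text \<open>The (algebraic) inductive limit: classes of pairs (n, f), f in C_n.\<close>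
definition limrel :: "(nat \<Rightarrow> nat) \<Rightarrow> (nat \<Rightarrow> pt) \<Rightarrow> ((nat \<times> elt) \<times> (nat \<times> elt)) set" where
  "limrel d xs = {((n, f), (m, g)). f \<in> Cset d n \<and> g \<in> Cset d m \<and>
      (\<exists>p. n \<le> p \<and> m \<le> p \<and> eqC d p (Gam d xs n (p - n) f) (Gam d xs m (p - m) g))}"

definition Clim :: "(nat \<Rightarrow> nat) \<Rightarrow> (nat \<Rightarrow> pt) \<Rightarrow> (nat \<times> elt) set set" where
  "Clim d xs = (SIGMA n:UNIV. Cset d n) // limrel d xs"

definition Ginf :: "(nat \<Rightarrow> nat) \<Rightarrow> (nat \<Rightarrow> pt) \<Rightarrow> nat \<Rightarrow> elt \<Rightarrow> (nat \<times> elt) set" where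
  "Ginf d xs n f = limrel d xs `` {(n, f)}"

definition eadd :: "elt \<Rightarrow> elt \<Rightarrow> elt" where
  "eadd f g = (\<lambda>y k a b. f y k a b + g y k a b)"
definition emul :: "(nat \<Rightarrow> nat) \<Rightarrow> nat \<Rightarrow> elt \<Rightarrow> elt \<Rightarrow> elt" where
  "emul d p f g = (\<lambda>y k. mmul d p (f y k) (g y k))"
definition esmul :: "complex \<Rightarrow> elt \<Rightarrow> elt" where
  "esmul c f = (\<lambda>y k a b. c * f y k a b)"
definition estar :: "elt \<Rightarrow> elt" where
  "estar f = (\<lambda>y k. madj (f y k))"

definition cadd :: "(nat \<Rightarrow> nat) \<Rightarrow> (nat \<Rightarrow> pt) \<Rightarrow> (nat \<times> elt) set \<Rightarrow> (nat \<times> elt) set \<Rightarrow> (nat \<times> elt) set" where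
  "cadd d xs A B = (\<Union>(n, f)\<in>A. \<Union>(m, g)\<in>B.
      Ginf d xs (max n m) (eadd (Gam d xs n (max n m - n) f) (Gam d xs m (max n m - m) g)))"
definition cmul :: "(nat \<Rightarrow> nat) \<Rightarrow> (nat \<Rightarrow> pt) \<Rightarrow> (nat \<times> elt) set \<Rightarrow> (nat \<times> elt) set \<Rightarrow> (nat \<times> elt) set" where
  "cmul d xs A B = (\<Union>(n, f)\<in>A. \<Union>(m, g)\<in>B.
      Ginf d xs (max n m) (emul d (max n m) (Gam d xs n (max n m - n) f) (Gam d xs m (max n m - m) g)))"
definition csmul :: "(nat \<Rightarrow> nat) \<Rightarrow> (nat \<Rightarrow> pt) \<Rightarrow> complex \<Rightarrow> (nat \<times> elt) set \<Rightarrow> (nat \<times> elt) set" where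
  "csmul d xs c A = (\<Union>(n, f)\<in>A. Ginf d xs n (esmul c f))"
definition cstar :: "(nat \<Rightarrow> nat) \<Rightarrow> (nat \<Rightarrow> pt) \<Rightarrow> (nat \<times> elt) set \<Rightarrow> (nat \<times> elt) set" where
  "cstar d xs A = (\<Union>(n, f)\<in>A. Ginf d xs n (estar f))"

end

theory Submission
  imports Defs
begin

text \<open>Conjugation by u_{n+1} = u_n (x) v_{n+1} only permutes matrix indices, and
  Gamma_{n+1,n} f is block diagonal in the last tensor factor.  On the first d(n+1)
  blocks v_{n+1} is the identity and the shift of Z_{2^{n+1}} reduces to the shift of
  Z_{2^n}, so alpha_{n+1} turns the block f o S_{n,j} into (alpha_n f) o S_{n,j}.  The
  last 2^n blocks are the constants f(x_n, j), and the cyclic permutation in v_{n+1}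
  replaces f(x_n, j) by the neighbouring block f(x_n, j + 1), which is again
  (alpha_n f) o S_{n,j}.  Each alpha_n is invertible (shift back and conjugate by u_n^*)
  and commutes with the pointwise *-operations, so together with the commutation with
  the connecting maps this makes the alpha_n descend to a bijection of the algebraic
  inductive limit respecting its operations.\<close>

section \<open>The unitaries u_n as permutation matrices\<close>

definition vperm :: "(nat \<Rightarrow> nat) \<Rightarrow> nat \<Rightarrow> nat \<Rightarrow> nat" where
  "vperm d m p = (if p \<le> d m then p else if p < d m + 2 ^ (m - 1) then p + 1 else d m + 1)"

definition vperm_inv :: "(nat \<Rightarrow> nat) \<Rightarrow> nat \<Rightarrow> nat \<Rightarrow> nat" where
  "vperm_inv d m p = (if p \<le> d m then p else if p = d m + 1 then d m + 2 ^ (m - 1) else p - 1)"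

lemma lsz_Suc: "lsz d (Suc j) = d (Suc j) + 2 ^ j"
  by (simp add: lsz_def)

lemma
  assumes "p \<in> {1..lsz d (Suc j)}"
  shows vperm_mem: "vperm d (Suc j) p \<in> {1..lsz d (Suc j)}"
    and vperm_inv_mem: "vperm_inv d (Suc j) p \<in> {1..lsz d (Suc j)}"
    and vperm_inv_vperm: "vperm_inv d (Suc j) (vperm d (Suc j) p) = p"
    and vperm_vperm_inv: "vperm d (Suc j) (vperm_inv d (Suc j) p) = p"
  using assms one_le_power[of 2 j] by (auto simp: vperm_def vperm_inv_def lsz_Suc)

lemma vperm_eq_iff:
  assumes "p \<in> {1..lsz d (Suc j)}" "q \<in> {1..lsz d (Suc j)}"
  shows "vperm d (Suc j) p = vperm d (Suc j) q \<longleftrightarrow> p = q"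
  using vperm_inv_vperm[OF assms(1)] vperm_inv_vperm[OF assms(2)] by metis

lemma vmat_eq:
  assumes "p \<in> {1..lsz d (Suc j)}"
  shows "vmat d (Suc j) p q = (if q = vperm d (Suc j) p then 1 else 0)"
  using assms one_le_power[of 2 j] by (auto simp: vmat_def vperm_def lsz_Suc)

definition uperm :: "(nat \<Rightarrow> nat) \<Rightarrow> nat list \<Rightarrow> nat list" where
  "uperm d a = map (\<lambda>j. vperm d (Suc j) (a ! j)) [0..<length a]"

definition uperm_inv :: "(nat \<Rightarrow> nat) \<Rightarrow> nat list \<Rightarrow> nat list" where
  "uperm_inv d a = map (\<lambda>j. vperm_inv d (Suc j) (a ! j)) [0..<length a]"

lemma length_uperm [simp]: "length (uperm d a) = length a"
  by (simp add: uperm_def)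

lemma length_uperm_inv [simp]: "length (uperm_inv d a) = length a"
  by (simp add: uperm_inv_def)

lemma nth_uperm [simp]: "j < length a \<Longrightarrow> uperm d a ! j = vperm d (Suc j) (a ! j)"
  by (simp add: uperm_def)

lemma nth_uperm_inv [simp]: "j < length a \<Longrightarrow> uperm_inv d a ! j = vperm_inv d (Suc j) (a ! j)"
  by (simp add: uperm_inv_def)

lemma idx_iff: "a \<in> idx d n \<longleftrightarrow> length a = n \<and> (\<forall>j<n. a ! j \<in> {1..lsz d (Suc j)})"
  by (auto simp: idx_def)

lemma uperm_idx: "a \<in> idx d n \<Longrightarrow> uperm d a \<in> idx d n"
  unfolding idx_iff using vperm_mem by simp

lemma uperm_inv_idx: "a \<in> idx d n \<Longrightarrow> uperm_inv d a \<in> idx d n"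
  unfolding idx_iff using vperm_inv_mem by simp

lemma uperm_inv_uperm: "a \<in> idx d n \<Longrightarrow> uperm_inv d (uperm d a) = a"
  by (rule nth_equalityI) (auto simp: idx_iff vperm_inv_vperm)

lemma uperm_uperm_inv: "a \<in> idx d n \<Longrightarrow> uperm d (uperm_inv d a) = a"
  by (rule nth_equalityI) (auto simp: idx_iff vperm_vperm_inv)

lemma bij_betw_uperm: "bij_betw (uperm d) (idx d n) (idx d n)"
  by (rule bij_betw_byWitness[where f' = "uperm_inv d"])
    (auto simp: uperm_inv_uperm uperm_uperm_inv uperm_idx uperm_inv_idx)

lemma butlast_uperm: "butlast (uperm d a) = uperm d (butlast a)"
  by (rule nth_equalityI) (auto simp: nth_butlast)

lemma last_uperm: "length a = Suc n \<Longrightarrow> last (uperm d a) = vperm d (Suc n) (last a)"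
  by (auto simp: last_conv_nth simp flip: length_0_conv)

lemma idx_0: "idx d 0 = {[]}"
  by (auto simp: idx_def)

lemma idx_Suc: "idx d (Suc n) = (\<lambda>(c, j). c @ [j]) ` (idx d n \<times> {1..lsz d (Suc n)})"
proof
  show "idx d (Suc n) \<subseteq> (\<lambda>(c, j). c @ [j]) ` (idx d n \<times> {1..lsz d (Suc n)})"
  proof
    fix a assume a: "a \<in> idx d (Suc n)"
    then have "a \<noteq> []" by (auto simp: idx_iff)
    then have "a = butlast a @ [last a]" and "last a = a ! n"
      using a by (simp, simp add: idx_iff last_conv_nth)
    moreover have "butlast a \<in> idx d n"
      using a by (auto simp: idx_iff nth_butlast)
    ultimately show "a \<in> (\<lambda>(c, j). c @ [j]) ` (idx d n \<times> {1..lsz d (Suc n)})"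
      using a by (auto simp: idx_iff intro!: image_eqI[where x = "(butlast a, last a)"])
  qed
  show "(\<lambda>(c, j). c @ [j]) ` (idx d n \<times> {1..lsz d (Suc n)}) \<subseteq> idx d (Suc n)"
    by (auto simp: idx_iff nth_append less_Suc_eq)
qed

lemma idx_SucD:
  assumes "a \<in> idx d (Suc n)"
  shows "butlast a \<in> idx d n" "last a \<in> {1..lsz d (Suc n)}" "length a = Suc n"
  using assms by (auto simp: idx_Suc idx_iff)

lemma finite_idx: "finite (idx d n)"
  by (induction n) (simp_all add: idx_0 idx_Suc)

lemma idx_Suc_last_eq: "j \<in> {1..lsz d (Suc n)} \<Longrightarrow> {c \<in> idx d (Suc n). last c = j} = (\<lambda>c. c @ [j]) ` idx d n"
  by (auto simp: idx_Suc)

lemma umat_eq: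
  assumes "a \<in> idx d n" "b \<in> idx d n"
  shows "umat d n a b = (if b = uperm d a then 1 else 0)"
proof -
  have "umat d n a b = (\<Prod>j<n. if b ! j = uperm d a ! j then 1 else 0)"
    unfolding umat_def by (rule prod.cong) (use assms in \<open>auto simp: idx_iff vmat_eq\<close>)
  also have "\<dots> = (if \<forall>j<n. b ! j = uperm d a ! j then 1 else 0)"
    by (auto intro: prod_zero)
  also have "(\<forall>j<n. b ! j = uperm d a ! j) \<longleftrightarrow> b = uperm d a"
    using assms by (auto simp: idx_iff list_eq_iff_nth_eq)
  finally show ?thesis .
qed

lemma mmul_umat_left:
  assumes "a \<in> idx d n"
  shows "mmul d n (umat d n) X a b = X (uperm d a) b"
proof -
  have "mmul d n (umat d n) X a b = (\<Sum>c\<in>idx d n. if c = uperm d a then X c b else 0)"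
    unfolding mmul_def by (rule sum.cong) (simp_all add: umat_eq assms)
  then show ?thesis by (simp add: finite_idx uperm_idx assms)
qed

lemma mmul_madj_umat_right:
  assumes "b \<in> idx d n"
  shows "mmul d n X (madj (umat d n)) a b = X a (uperm d b)"
proof -
  have "mmul d n X (madj (umat d n)) a b = (\<Sum>c\<in>idx d n. if c = uperm d b then X a c else 0)"
    unfolding mmul_def madj_def by (rule sum.cong) (simp_all add: umat_eq assms)
  then show ?thesis by (simp add: finite_idx uperm_idx assms)
qed

lemma alph_apply:
  "a \<in> idx d n \<Longrightarrow> b \<in> idx d n \<Longrightarrow> alph d n f y k a b = f y ((k + 1) mod 2 ^ n) (uperm d a) (uperm d b)"
  by (simp add: alph_def mmul_madj_umat_right mmul_umat_left)

section \<open>The automorphisms alpha_n\<close>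

lemma mod_succ_pred:
  fixes k N :: nat
  assumes "k < N"
  shows "((k + 1) mod N + N - 1) mod N = k"
proof (cases "k + 1 = N")
  case False
  with assms show ?thesis by simp
qed simp

lemma mod_pred_succ:
  fixes k N :: nat
  assumes "k < N"
  shows "((k + N - 1) mod N + 1) mod N = k"
proof (cases k)
  case 0
  with assms show ?thesis by (simp add: Suc_leI)
next
  case (Suc k')
  with assms show ?thesis by simp
qed

lemma eqC_refl: "eqC d n f f"
  by (simp add: eqC_def)

lemma eqC_sym: "eqC d n f g \<Longrightarrow> eqC d n g f"
  by (simp add: eqC_def)

lemma eqC_trans [trans]: "eqC d n f g \<Longrightarrow> eqC d n g h \<Longrightarrow> eqC d n f h"
  by (simp add: eqC_def)

lemma eqC_cong: "eqC d n f f' \<Longrightarrow> eqC d n g g' \<Longrightarrow> eqC d n f g \<longleftrightarrow> eqC d n f' g'"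
  by (simp add: eqC_def)

lemma Cset_eqC:
  assumes "eqC d n f g" "g \<in> Cset d n"
  shows "f \<in> Cset d n"
  unfolding Cset_def
proof (intro CollectI allI impI ballI)
  fix k :: nat and a b assume "k < 2 ^ n" "a \<in> idx d n" "b \<in> idx d n"
  then show "continuous_on (Xsp d n) (\<lambda>x. f x k a b)"
    using assms continuous_on_cong[of "Xsp d n" "Xsp d n" "\<lambda>x. f x k a b" "\<lambda>x. g x k a b"]
    by (simp add: Cset_def eqC_def)
qed

definition alph_inv :: "(nat \<Rightarrow> nat) \<Rightarrow> nat \<Rightarrow> elt \<Rightarrow> elt" where
  "alph_inv d n g = (\<lambda>y k a b. g y ((k + 2 ^ n - 1) mod 2 ^ n) (uperm_inv d a) (uperm_inv d b))"

lemma alph_alph_inv: "eqC d n (alph d n (alph_inv d n g)) g"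
  by (simp add: eqC_def alph_apply alph_inv_def uperm_inv_uperm mod_succ_pred[simplified])

lemma alph_inv_alph: "eqC d n (alph_inv d n (alph d n f)) f"
  by (simp add: eqC_def alph_apply alph_inv_def uperm_inv_idx uperm_uperm_inv mod_pred_succ[simplified])

lemma alph_eqC: "eqC d n f g \<Longrightarrow> eqC d n (alph d n f) (alph d n g)"
  by (simp add: eqC_def alph_apply uperm_idx)

lemma alph_inv_eqC: "eqC d n f g \<Longrightarrow> eqC d n (alph_inv d n f) (alph_inv d n g)"
  by (simp add: eqC_def alph_inv_def uperm_inv_idx)

lemma alph_Cset: "f \<in> Cset d n \<Longrightarrow> alph d n f \<in> Cset d n"
  by (simp add: Cset_def alph_apply uperm_idx)

lemma alph_inv_Cset: "f \<in> Cset d n \<Longrightarrow> alph_inv d n f \<in> Cset d n"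
  by (simp add: Cset_def alph_inv_def uperm_inv_idx)

lemma alph_Cset_iff: "alph d n f \<in> Cset d n \<longleftrightarrow> f \<in> Cset d n"
  using alph_Cset Cset_eqC[OF eqC_sym[OF alph_inv_alph] alph_inv_Cset] by blast

lemma alph_eqC_iff: "eqC d n (alph d n f) (alph d n g) \<longleftrightarrow> eqC d n f g"
  using alph_eqC alph_inv_eqC eqC_cong[OF alph_inv_alph alph_inv_alph] by blast

section \<open>The connecting maps and their commutation with the alpha_n\<close>

lemma ssz_Suc: "ssz d (Suc n) = ssz d n * d (Suc n)"
  by (simp add: ssz_def)

lemma proj_Xsp:
  assumes y: "y \<in> Xsp d (Suc n)" and j: "j \<in> {1..d (Suc n)}"
  shows "proj d n j y \<in> Xsp d n"
proof -
  have "(j - 1) * ssz d n + i < ssz d (Suc n)" if "i < ssz d n" for i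
  proof -
    have "(j - 1) * ssz d n + i < j * ssz d n"
      using that j by (cases j) auto
    also have "\<dots> \<le> ssz d (Suc n)"
      using j by (simp add: ssz_Suc)
    finally show ?thesis .
  qed
  then show ?thesis
    using y by (auto simp: Xsp_def proj_def)
qed

lemma continuous_on_proj: "continuous_on S (proj d n j)"
  unfolding proj_def
proof (intro continuous_on_coordinatewise_then_product)
  fix i
  show "continuous_on S (\<lambda>x. if i < ssz d n then x ((j - 1) * ssz d n + i) else 0)"
    by (cases "i < ssz d n")
      (auto intro: continuous_on_subset[OF continuous_on_product_coordinates subset_UNIV])
qed

lemma Gam1_apply:
  "Gam1 d xs n f y k a b =
    (if last a = last b
     then f (fst (Smap d xs n (last a) y k)) (snd (Smap d xs n (last a) y k)) (butlast a) (butlast b)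
     else 0)"
  by (simp add: Gam1_def)

text \<open>This is where the shape of v_{n+1} matters: on the last 2^n indices, where S_{n,j}
  is the constant (x_n, j - d(n+1) - 1), the cyclic permutation raises the second
  coordinate by one (mod 2^n); on the first d(n+1) indices the shift k \<mapsto> k + 1
  does the same.\<close>

lemma Smap_vperm:
  assumes j: "j \<in> {1..lsz d (Suc n)}"
  shows "Smap d xs n (vperm d (Suc n) j) y ((k + 1) mod 2 ^ Suc n)
       = (fst (Smap d xs n j y k), (snd (Smap d xs n j y k) + 1) mod 2 ^ n)"
proof -
  have k: "((k + 1) mod 2 ^ Suc n) mod 2 ^ n = (k mod 2 ^ n + 1) mod 2 ^ n"
    by (simp add: mod_mod_cancel mod_Suc_eq)
  consider "j \<le> d (Suc n)" | "d (Suc n) < j" "j < d (Suc n) + 2 ^ n" | "j = d (Suc n) + 2 ^ n"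
    using j by (force simp: lsz_Suc)
  then show ?thesis
  proof cases
    case 1
    with k show ?thesis by (simp add: vperm_def Smap_def)
  next
    case 2
    then have "j - d (Suc n) < 2 ^ n" by simp
    with 2 show ?thesis by (simp add: vperm_def Smap_def)
  next
    case 3
    have "(2::nat) ^ n - 1 + 1 = 2 ^ n" by simp
    with 3 show ?thesis by (simp add: vperm_def Smap_def)
  qed
qed

lemma alph_Gam1_eqC: "eqC d (Suc n) (alph d (Suc n) (Gam1 d xs n f)) (Gam1 d xs n (alph d n f))"
  unfolding eqC_def
proof (intro ballI allI impI)
  fix y and k :: nat and a b
  assume a: "a \<in> idx d (Suc n)" and b: "b \<in> idx d (Suc n)"
  note A = idx_SucD[OF a] and B = idx_SucD[OF b]
  have "alph d (Suc n) (Gam1 d xs n f) y k a b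
      = Gam1 d xs n f y ((k + 1) mod 2 ^ Suc n) (uperm d a) (uperm d b)"
    using a b by (rule alph_apply)
  also have "\<dots> = Gam1 d xs n (alph d n f) y k a b"
    unfolding Gam1_apply last_uperm[OF A(3)] last_uperm[OF B(3)] butlast_uperm vperm_eq_iff[OF A(2) B(2)]
    using alph_apply[OF A(1) B(1)] Smap_vperm[OF B(2)] by simp
  finally show "alph d (Suc n) (Gam1 d xs n f) y k a b = Gam1 d xs n (alph d n f) y k a b" .
qed

lemma Gam_add: "Gam d xs n (p + q) f = Gam d xs (n + p) q (Gam d xs n p f)"
  by (induction q) (simp_all add: add.assoc)

locale inductive_system =
  fixes d :: "nat \<Rightarrow> nat" and xs :: "nat \<Rightarrow> pt"
  assumes xs_in_Xsp: "xs m \<in> Xsp d m"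
begin

abbreviation Gam_to :: "nat \<Rightarrow> nat \<Rightarrow> elt \<Rightarrow> elt" where
  "Gam_to n P \<equiv> Gam d xs n (P - n)"

lemma Smap_mem:
  assumes "y \<in> Xsp d (Suc n)" "j \<in> {1..lsz d (Suc n)}"
  shows "fst (Smap d xs n j y k) \<in> Xsp d n" "snd (Smap d xs n j y k) < 2 ^ n"
  using assms proj_Xsp[OF assms(1)] xs_in_Xsp by (auto simp: Smap_def lsz_Suc)

lemma Gam1_Cset:
  assumes f: "f \<in> Cset d n"
  shows "Gam1 d xs n f \<in> Cset d (Suc n)"
  unfolding Cset_def
proof (intro CollectI allI impI ballI)
  fix k :: nat and a b assume a: "a \<in> idx d (Suc n)" and b: "b \<in> idx d (Suc n)"
  note A = idx_SucD[OF a] and B = idx_SucD[OF b]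
  show "continuous_on (Xsp d (Suc n)) (\<lambda>x. Gam1 d xs n f x k a b)"
  proof (cases "last a = last b \<and> last a \<le> d (Suc n)")
    case True
    have "continuous_on (Xsp d n) (\<lambda>x. f x (k mod 2 ^ n) (butlast a) (butlast b))"
      using f A(1) B(1) by (simp add: Cset_def)
    moreover have "proj d n (last a) ` Xsp d (Suc n) \<subseteq> Xsp d n"
      using proj_Xsp A(2) True by auto
    ultimately have "continuous_on (Xsp d (Suc n))
        (\<lambda>x. f (proj d n (last a) x) (k mod 2 ^ n) (butlast a) (butlast b))"
      by (rule continuous_on_compose2[OF _ continuous_on_proj])
    with True show ?thesis
      by (simp add: Gam1_apply Smap_def)
  qed (cases "last a = last b", auto simp: Gam1_apply Smap_def)
qed

lemma Gam1_eqC: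
  assumes "eqC d n f g"
  shows "eqC d (Suc n) (Gam1 d xs n f) (Gam1 d xs n g)"
  unfolding eqC_def
proof (intro ballI allI impI)
  fix y and k :: nat and a b
  assume y: "y \<in> Xsp d (Suc n)" and a: "a \<in> idx d (Suc n)" and b: "b \<in> idx d (Suc n)"
  note A = idx_SucD[OF a] and B = idx_SucD[OF b]
  show "Gam1 d xs n f y k a b = Gam1 d xs n g y k a b"
  proof (cases "last a = last b")
    case True
    with assms Smap_mem[OF y A(2)] A(1) B(1) show ?thesis
      by (simp add: eqC_def Gam1_apply)
  qed (simp add: Gam1_apply)
qed

lemma Gam_Cset:
  assumes "f \<in> Cset d n" "n \<le> P"
  shows "Gam_to n P f \<in> Cset d P"
proof -
  have "Gam d xs n p f \<in> Cset d (n + p)" for p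
    by (induction p) (simp_all add: assms(1) Gam1_Cset)
  from this[of "P - n"] show ?thesis
    using assms(2) by simp
qed

lemma Gam_eqC:
  assumes "eqC d n f g" "n \<le> P"
  shows "eqC d P (Gam_to n P f) (Gam_to n P g)"
proof -
  have "eqC d (n + p) (Gam d xs n p f) (Gam d xs n p g)" for p
    by (induction p) (simp_all add: assms(1) Gam1_eqC)
  from this[of "P - n"] show ?thesis
    using assms(2) by simp
qed

lemma Gam_to_trans: "n \<le> p \<Longrightarrow> p \<le> P \<Longrightarrow> Gam_to n P f = Gam_to p P (Gam_to n p f)"
  using Gam_add[of d xs n "p - n" "P - p" f] by simp

lemma alph_Gam_eqC:
  assumes "n \<le> P"
  shows "eqC d P (alph d P (Gam_to n P f)) (Gam_to n P (alph d n f))"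
proof -
  have "eqC d (n + p) (alph d (n + p) (Gam d xs n p f)) (Gam d xs n p (alph d n f))" for p
  proof (induction p)
    case (Suc p)
    from eqC_trans[OF alph_Gam1_eqC Gam1_eqC[OF Suc.IH]] show ?case
      by simp
  qed (simp add: eqC_refl)
  from this[of "P - n"] show ?thesis
    using assms by simp
qed

section \<open>The induced automorphism of the inductive limit\<close>

lemma limrel_CsetD: "((n, f), (m, g)) \<in> limrel d xs \<Longrightarrow> f \<in> Cset d n \<and> g \<in> Cset d m"
  by (simp add: limrel_def)

lemma limrel_intro:
  "f \<in> Cset d n \<Longrightarrow> g \<in> Cset d m \<Longrightarrow> n \<le> P \<Longrightarrow> m \<le> P \<Longrightarrow>
    eqC d P (Gam_to n P f) (Gam_to m P g) \<Longrightarrow> ((n, f), (m, g)) \<in> limrel d xs"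
  by (auto simp: limrel_def)

lemma limrel_eventually_eqC:
  assumes "((n, f), (m, g)) \<in> limrel d xs"
  obtains p where "n \<le> p" "m \<le> p" "\<And>P. p \<le> P \<Longrightarrow> eqC d P (Gam_to n P f) (Gam_to m P g)"
proof -
  from assms obtain p where p: "n \<le> p" "m \<le> p" "eqC d p (Gam_to n p f) (Gam_to m p g)"
    by (auto simp: limrel_def)
  have "eqC d P (Gam_to n P f) (Gam_to m P g)" if "p \<le> P" for P
    using Gam_eqC[OF p(3) that] Gam_to_trans[OF p(1) that, of f] Gam_to_trans[OF p(2) that, of g]
    by simp
  from p(1,2) this show ?thesis
    by (rule that)
qed

lemma equiv_limrel: "equiv (SIGMA n:UNIV. Cset d n) (limrel d xs)"
proof (rule equivI)
  show "limrel d xs \<subseteq> (SIGMA n:UNIV. Cset d n) \<times> (SIGMA n:UNIV. Cset d n)"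
    by (auto simp: limrel_def)
  show "refl_on (SIGMA n:UNIV. Cset d n) (limrel d xs)"
    by (auto simp: refl_on_def limrel_def eqC_refl)
  show "sym (limrel d xs)"
    by (auto simp: sym_def limrel_def eqC_sym)
  show "trans (limrel d xs)"
  proof (rule transI, clarify)
    fix n f m g q h
    assume fg: "((n, f), (m, g)) \<in> limrel d xs" and gh: "((m, g), (q, h)) \<in> limrel d xs"
    obtain p1 where p1: "n \<le> p1" "m \<le> p1" "\<And>P. p1 \<le> P \<Longrightarrow> eqC d P (Gam_to n P f) (Gam_to m P g)"
      using limrel_eventually_eqC[OF fg] by blast
    obtain p2 where p2: "m \<le> p2" "q \<le> p2" "\<And>P. p2 \<le> P \<Longrightarrow> eqC d P (Gam_to m P g) (Gam_to q P h)"
      using limrel_eventually_eqC[OF gh] by blast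
    have "eqC d (max p1 p2) (Gam_to n (max p1 p2) f) (Gam_to q (max p1 p2) h)"
      using eqC_trans[OF p1(3) p2(3)] by simp
    with fg gh p1 p2 show "((n, f), (q, h)) \<in> limrel d xs"
      by (intro limrel_intro) (auto dest: limrel_CsetD)
  qed
qed

lemma limrel_sym: "(x, y) \<in> limrel d xs \<Longrightarrow> (y, x) \<in> limrel d xs"
  using equiv_limrel by (auto elim: equivE symE)

lemma Ginf_empty: "f \<notin> Cset d n \<Longrightarrow> Ginf d xs n f = {}"
  by (auto simp: Ginf_def limrel_def)

lemma Ginf_self: "f \<in> Cset d n \<Longrightarrow> (n, f) \<in> Ginf d xs n f"
  by (auto simp: Ginf_def limrel_def eqC_refl)

lemma Ginf_in_Clim: "f \<in> Cset d n \<Longrightarrow> Ginf d xs n f \<in> Clim d xs"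
  unfolding Ginf_def Clim_def by (rule quotientI) simp

lemma Ginf_eq_iff:
  "f \<in> Cset d n \<Longrightarrow> g \<in> Cset d m \<Longrightarrow> Ginf d xs n f = Ginf d xs m g \<longleftrightarrow> ((n, f), (m, g)) \<in> limrel d xs"
  unfolding Ginf_def by (rule eq_equiv_class_iff[OF equiv_limrel]) auto

lemma Ginf_eq_if_eqC:
  "f \<in> Cset d n \<Longrightarrow> g \<in> Cset d n \<Longrightarrow> eqC d n f g \<Longrightarrow> Ginf d xs n f = Ginf d xs n g"
  by (simp add: Ginf_eq_iff limrel_intro[where P = n])

lemma ClimE:
  assumes "A \<in> Clim d xs"
  obtains n f where "f \<in> Cset d n" "A = Ginf d xs n f"
  using assms unfolding Clim_def Ginf_def by (auto elim: quotientE)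

lemma UN_Ginf_eq:
  assumes "f \<in> Cset d n" "\<And>m g. ((m, g), (n, f)) \<in> limrel d xs \<Longrightarrow> T (m, g) = K"
  shows "(\<Union>x\<in>Ginf d xs n f. T x) = K"
proof -
  have "T x = K" if "x \<in> Ginf d xs n f" for x
    using that assms(2) limrel_sym by (cases x) (auto simp: Ginf_def)
  then show ?thesis
    using Ginf_self[OF assms(1)] by blast
qed

lemma eqC_Gam_to_alph_iff:
  assumes "n \<le> P" "m \<le> P"
  shows "eqC d P (Gam_to n P (alph d n f)) (Gam_to m P (alph d m g))
     \<longleftrightarrow> eqC d P (Gam_to n P f) (Gam_to m P g)"
  using eqC_cong[OF alph_Gam_eqC[OF assms(1)] alph_Gam_eqC[OF assms(2)]] alph_eqC_iff by blast

lemma limrel_alph_iff: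
  "((n, alph d n f), (m, alph d m g)) \<in> limrel d xs \<longleftrightarrow> ((n, f), (m, g)) \<in> limrel d xs"
  unfolding limrel_def using eqC_Gam_to_alph_iff by (auto simp: alph_Cset_iff)

definition alph_lim :: "(nat \<times> elt) set \<Rightarrow> (nat \<times> elt) set" where
  "alph_lim A = (\<Union>(n, f)\<in>A. Ginf d xs n (alph d n f))"

lemma alph_lim_Ginf: "alph_lim (Ginf d xs n f) = Ginf d xs n (alph d n f)"
proof (cases "f \<in> Cset d n")
  case True
  show ?thesis
    unfolding alph_lim_def
  proof (rule UN_Ginf_eq[OF True], clarsimp)
    fix m g assume "((m, g), (n, f)) \<in> limrel d xs"
    then show "Ginf d xs m (alph d m g) = Ginf d xs n (alph d n f)"
      by (simp add: Ginf_eq_iff alph_Cset limrel_alph_iff limrel_CsetD)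
  qed
qed (simp add: Ginf_empty alph_Cset_iff alph_lim_def)

lemma bij_betw_alph_lim: "bij_betw alph_lim (Clim d xs) (Clim d xs)"
proof (rule bij_betw_imageI)
  show "inj_on alph_lim (Clim d xs)"
  proof (rule inj_onI)
    fix A B assume "A \<in> Clim d xs" "B \<in> Clim d xs" "alph_lim A = alph_lim B"
    then show "A = B"
      by (elim ClimE) (simp add: alph_lim_Ginf Ginf_eq_iff alph_Cset limrel_alph_iff)
  qed
  show "alph_lim ` Clim d xs = Clim d xs"
  proof (intro equalityI subsetI)
    fix B assume "B \<in> alph_lim ` Clim d xs"
    then show "B \<in> Clim d xs"
      by (auto elim!: ClimE simp: alph_lim_Ginf alph_Cset Ginf_in_Clim)
  next
    fix B assume "B \<in> Clim d xs"
    then obtain n g where g: "g \<in> Cset d n" "B = Ginf d xs n g"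
      by (rule ClimE)
    have "alph_lim (Ginf d xs n (alph_inv d n g)) = B"
      using g alph_alph_inv[of d n g] by (simp add: alph_lim_Ginf Ginf_eq_if_eqC alph_Cset alph_inv_Cset)
    then show "B \<in> alph_lim ` Clim d xs"
      using Ginf_in_Clim[OF alph_inv_Cset[OF g(1)]] by force
  qed
qed

section \<open>Compatibility with the *-algebra operations\<close>

definition lim_binop :: "(nat \<Rightarrow> elt \<Rightarrow> elt \<Rightarrow> elt) \<Rightarrow> (nat \<times> elt) set \<Rightarrow> (nat \<times> elt) set \<Rightarrow> (nat \<times> elt) set" where
  "lim_binop op A B = (\<Union>(n, f)\<in>A. \<Union>(m, g)\<in>B.
      Ginf d xs (max n m) (op (max n m) (Gam_to n (max n m) f) (Gam_to m (max n m) g)))"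

definition lim_unop :: "(nat \<Rightarrow> elt \<Rightarrow> elt) \<Rightarrow> (nat \<times> elt) set \<Rightarrow> (nat \<times> elt) set" where
  "lim_unop op A = (\<Union>(n, f)\<in>A. Ginf d xs n (op n f))"

lemma cadd_eq_lim_binop: "cadd d xs = lim_binop (\<lambda>_. eadd)"
  by (simp add: fun_eq_iff cadd_def lim_binop_def)

lemma cmul_eq_lim_binop: "cmul d xs = lim_binop (emul d)"
  by (simp add: fun_eq_iff cmul_def lim_binop_def)

lemma csmul_eq_lim_unop: "csmul d xs c = lim_unop (\<lambda>_. esmul c)"
  by (simp add: fun_eq_iff csmul_def lim_unop_def)

lemma cstar_eq_lim_unop: "cstar d xs = lim_unop (\<lambda>_. estar)"
  by (simp add: fun_eq_iff cstar_def lim_unop_def)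

end

locale binop_compatible = inductive_system +
  fixes op :: "nat \<Rightarrow> elt \<Rightarrow> elt \<Rightarrow> elt"
  assumes op_Cset: "f \<in> Cset d p \<Longrightarrow> g \<in> Cset d p \<Longrightarrow> op p f g \<in> Cset d p"
    and op_eqC: "eqC d p f f' \<Longrightarrow> eqC d p g g' \<Longrightarrow> eqC d p (op p f g) (op p f' g')"
    and Gam1_op_eqC: "eqC d (Suc p) (Gam1 d xs p (op p f g)) (op (Suc p) (Gam1 d xs p f) (Gam1 d xs p g))"
    and alph_op_eqC: "f \<in> Cset d p \<Longrightarrow> g \<in> Cset d p \<Longrightarrow>
      eqC d p (alph d p (op p f g)) (op p (alph d p f) (alph d p g))"
begin

lemma Gam_op_eqC:
  assumes "M \<le> P"
  shows "eqC d P (Gam_to M P (op M f g)) (op P (Gam_to M P f) (Gam_to M P g))"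
proof -
  have "eqC d (M + p) (Gam d xs M p (op M f g)) (op (M + p) (Gam d xs M p f) (Gam d xs M p g))" for p
  proof (induction p)
    case (Suc p)
    from eqC_trans[OF Gam1_eqC[OF Suc.IH] Gam1_op_eqC] show ?case
      by simp
  qed (simp add: eqC_refl)
  from this[of "P - M"] show ?thesis
    using assms by simp
qed

lemma Gam_op_Gam_eqC:
  assumes "n \<le> M" "m \<le> M" "M \<le> P"
  shows "eqC d P (Gam_to M P (op M (Gam_to n M f) (Gam_to m M g)))
                 (op P (Gam_to n P f) (Gam_to m P g))"
  using Gam_op_eqC[OF assms(3)] Gam_to_trans[OF assms(1,3)] Gam_to_trans[OF assms(2,3)] by simp

lemma limrel_op:
  assumes "((n', f'), (n, f)) \<in> limrel d xs" "((m', g'), (m, g)) \<in> limrel d xs"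
  shows "((max n' m', op (max n' m') (Gam_to n' (max n' m') f') (Gam_to m' (max n' m') g')),
          (max n m, op (max n m) (Gam_to n (max n m) f) (Gam_to m (max n m) g))) \<in> limrel d xs"
proof -
  obtain p1 where p1: "n' \<le> p1" "n \<le> p1" "\<And>P. p1 \<le> P \<Longrightarrow> eqC d P (Gam_to n' P f') (Gam_to n P f)"
    using limrel_eventually_eqC[OF assms(1)] by blast
  obtain p2 where p2: "m' \<le> p2" "m \<le> p2" "\<And>P. p2 \<le> P \<Longrightarrow> eqC d P (Gam_to m' P g') (Gam_to m P g)"
    using limrel_eventually_eqC[OF assms(2)] by blast
  define P where "P = max (max p1 p2) (max (max n m) (max n' m'))"
  have "eqC d P (Gam_to (max n' m') P (op (max n' m') (Gam_to n' (max n' m') f') (Gam_to m' (max n' m') g')))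
                (op P (Gam_to n' P f') (Gam_to m' P g'))"
    unfolding P_def by (rule Gam_op_Gam_eqC) auto
  also have "eqC d P (op P (Gam_to n' P f') (Gam_to m' P g')) (op P (Gam_to n P f) (Gam_to m P g))"
    by (rule op_eqC) (auto simp: P_def intro: p1(3) p2(3))
  also have "eqC d P (op P (Gam_to n P f) (Gam_to m P g))
                (Gam_to (max n m) P (op (max n m) (Gam_to n (max n m) f) (Gam_to m (max n m) g)))"
    unfolding P_def by (rule eqC_sym, rule Gam_op_Gam_eqC) auto
  finally show ?thesis
    using assms by (intro limrel_intro op_Cset Gam_Cset) (auto simp: P_def dest: limrel_CsetD)
qed

lemma lim_binop_Ginf:
  assumes f: "f \<in> Cset d n" and g: "g \<in> Cset d m"
  shows "lim_binop op (Ginf d xs n f) (Ginf d xs m g)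
     = Ginf d xs (max n m) (op (max n m) (Gam_to n (max n m) f) (Gam_to m (max n m) g))"
  unfolding lim_binop_def
proof (rule UN_Ginf_eq[OF f], simp)
  fix n' f' assume f': "((n', f'), (n, f)) \<in> limrel d xs"
  show "(\<Union>(m', g')\<in>Ginf d xs m g.
          Ginf d xs (max n' m') (op (max n' m') (Gam_to n' (max n' m') f') (Gam_to m' (max n' m') g')))
      = Ginf d xs (max n m) (op (max n m) (Gam_to n (max n m) f) (Gam_to m (max n m) g))"
  proof (rule UN_Ginf_eq[OF g], simp)
    fix m' g' assume g': "((m', g'), (m, g)) \<in> limrel d xs"
    from limrel_op[OF f' g'] show "Ginf d xs (max n' m') (op (max n' m') (Gam_to n' (max n' m') f') (Gam_to m' (max n' m') g'))
      = Ginf d xs (max n m) (op (max n m) (Gam_to n (max n m) f) (Gam_to m (max n m) g))"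
      by (simp add: Ginf_eq_iff limrel_CsetD)
  qed
qed

lemma alph_lim_lim_binop:
  assumes "A \<in> Clim d xs" "B \<in> Clim d xs"
  shows "alph_lim (lim_binop op A B) = lim_binop op (alph_lim A) (alph_lim B)"
proof -
  obtain n f where f: "f \<in> Cset d n" "A = Ginf d xs n f"
    using assms(1) by (rule ClimE)
  obtain m g where g: "g \<in> Cset d m" "B = Ginf d xs m g"
    using assms(2) by (rule ClimE)
  define M where "M = max n m"
  have F: "Gam_to n M f \<in> Cset d M" and G: "Gam_to m M g \<in> Cset d M"
    using f g by (simp_all add: M_def Gam_Cset)
  have "eqC d M (alph d M (op M (Gam_to n M f) (Gam_to m M g)))
                (op M (alph d M (Gam_to n M f)) (alph d M (Gam_to m M g)))"
    by (rule alph_op_eqC[OF F G])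
  also have "eqC d M (op M (alph d M (Gam_to n M f)) (alph d M (Gam_to m M g)))
                     (op M (Gam_to n M (alph d n f)) (Gam_to m M (alph d m g)))"
    by (rule op_eqC) (simp_all add: M_def alph_Gam_eqC)
  finally have "Ginf d xs M (alph d M (op M (Gam_to n M f) (Gam_to m M g)))
              = Ginf d xs M (op M (Gam_to n M (alph d n f)) (Gam_to m M (alph d m g)))"
    using F G f g by (intro Ginf_eq_if_eqC alph_Cset op_Cset) (simp_all add: M_def Gam_Cset alph_Cset)
  then show ?thesis
    by (simp add: f g M_def lim_binop_Ginf alph_lim_Ginf alph_Cset)
qed

end

locale unop_compatible = inductive_system +
  fixes op :: "nat \<Rightarrow> elt \<Rightarrow> elt"
  assumes op_Cset: "f \<in> Cset d p \<Longrightarrow> op p f \<in> Cset d p"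
    and op_eqC: "eqC d p f f' \<Longrightarrow> eqC d p (op p f) (op p f')"
    and Gam1_op_eqC: "eqC d (Suc p) (Gam1 d xs p (op p f)) (op (Suc p) (Gam1 d xs p f))"
    and alph_op_eqC: "f \<in> Cset d p \<Longrightarrow> eqC d p (alph d p (op p f)) (op p (alph d p f))"

sublocale unop_compatible \<subseteq> binary: binop_compatible d xs "\<lambda>p f g. op p f"
  by unfold_locales (simp_all add: op_Cset op_eqC Gam1_op_eqC alph_op_eqC)

context unop_compatible
begin

lemma limrel_op: "((n', f'), (n, f)) \<in> limrel d xs \<Longrightarrow> ((n', op n' f'), (n, op n f)) \<in> limrel d xs"
  using binary.limrel_op[of n' f' n f n' f' n f] by simp

lemma lim_unop_Ginf:
  assumes "f \<in> Cset d n"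
  shows "lim_unop op (Ginf d xs n f) = Ginf d xs n (op n f)"
  unfolding lim_unop_def
  by (rule UN_Ginf_eq[OF assms]) (simp add: Ginf_eq_iff limrel_op limrel_CsetD op_Cset)

lemma alph_lim_lim_unop:
  assumes "A \<in> Clim d xs"
  shows "alph_lim (lim_unop op A) = lim_unop op (alph_lim A)"
proof -
  obtain n f where f: "f \<in> Cset d n" "A = Ginf d xs n f"
    using assms by (rule ClimE)
  then have "Ginf d xs n (alph d n (op n f)) = Ginf d xs n (op n (alph d n f))"
    by (intro Ginf_eq_if_eqC alph_op_eqC) (simp_all add: alph_Cset op_Cset)
  with f show ?thesis
    by (simp add: lim_unop_Ginf alph_lim_Ginf alph_Cset op_Cset)
qed

end

lemma emul_Cset: "f \<in> Cset d p \<Longrightarrow> g \<in> Cset d p \<Longrightarrow> emul d p f g \<in> Cset d p"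
  unfolding Cset_def emul_def mmul_def by (auto intro!: continuous_on_sum continuous_on_mult)

lemma emul_eqC: "eqC d p f f' \<Longrightarrow> eqC d p g g' \<Longrightarrow> eqC d p (emul d p f g) (emul d p f' g')"
  unfolding eqC_def emul_def mmul_def by (auto intro!: sum.cong)

lemma alph_emul_eqC: "eqC d p (alph d p (emul d p f g)) (emul d p (alph d p f) (alph d p g))"
  unfolding eqC_def
proof (intro ballI allI impI)
  fix y and k :: nat and a b assume a: "a \<in> idx d p" and b: "b \<in> idx d p"
  let ?k = "(k + 1) mod 2 ^ p"
  have "emul d p (alph d p f) (alph d p g) y k a b
      = (\<Sum>c\<in>idx d p. f y ?k (uperm d a) (uperm d c) * g y ?k (uperm d c) (uperm d b))"
    unfolding emul_def mmul_def by (rule sum.cong) (simp_all add: alph_apply a b)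
  also have "\<dots> = (\<Sum>c\<in>idx d p. f y ?k (uperm d a) c * g y ?k c (uperm d b))"
    by (rule sum.reindex_bij_betw[OF bij_betw_uperm])
  also have "\<dots> = alph d p (emul d p f g) y k a b"
    by (simp add: alph_apply a b emul_def mmul_def)
  finally show "alph d p (emul d p f g) y k a b = emul d p (alph d p f) (alph d p g) y k a b"
    by simp
qed

text \<open>gamma_p is block diagonal, so it is multiplicative: only the indices c with
  last c = last a contribute to the product, and these are the c' @ [last a].\<close>

lemma Gam1_emul_eqC:
  "eqC d (Suc p) (Gam1 d xs p (emul d p f g)) (emul d (Suc p) (Gam1 d xs p f) (Gam1 d xs p g))"
  unfolding eqC_def
proof (intro ballI allI impI)
  fix y and k :: nat and a b assume a: "a \<in> idx d (Suc p)" and b: "b \<in> idx d (Suc p)"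
  show "Gam1 d xs p (emul d p f g) y k a b = emul d (Suc p) (Gam1 d xs p f) (Gam1 d xs p g) y k a b"
  proof (cases "last a = last b")
    case False
    then show ?thesis
      unfolding emul_def mmul_def by (auto simp: Gam1_apply intro!: sum.neutral)
  next
    case True
    define j where "j = last a"
    have j: "j \<in> {1..lsz d (Suc p)}"
      using idx_SucD(2)[OF a] by (simp add: j_def)
    define F where "F c = f (fst (Smap d xs p j y k)) (snd (Smap d xs p j y k)) (butlast a) c *
                          g (fst (Smap d xs p j y k)) (snd (Smap d xs p j y k)) c (butlast b)" for c
    have "emul d (Suc p) (Gam1 d xs p f) (Gam1 d xs p g) y k a b
        = (\<Sum>c\<in>idx d (Suc p). if last c = j then F (butlast c) else 0)"
      unfolding emul_def mmul_def by (rule sum.cong) (auto simp: Gam1_apply F_def j_def True)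
    also have "\<dots> = (\<Sum>c\<in>{c \<in> idx d (Suc p). last c = j}. F (butlast c))"
      by (simp add: sum.inter_filter finite_idx)
    also have "\<dots> = (\<Sum>c\<in>idx d p. F c)"
      by (simp add: idx_Suc_last_eq[OF j] sum.reindex inj_on_def)
    also have "\<dots> = Gam1 d xs p (emul d p f g) y k a b"
      by (simp add: Gam1_apply True emul_def mmul_def F_def j_def)
    finally show ?thesis
      by simp
  qed
qed

context inductive_system
begin

lemma binop_compatible_eadd: "binop_compatible d xs (\<lambda>_. eadd)"
  by unfold_locales
    (auto simp: Cset_def eqC_def Gam1_apply alph_apply eadd_def intro: continuous_on_add)

lemma binop_compatible_emul: "binop_compatible d xs (emul d)"
  by unfold_locales (simp_all add: emul_Cset emul_eqC alph_emul_eqC Gam1_emul_eqC)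

lemma unop_compatible_esmul: "unop_compatible d xs (\<lambda>_. esmul c)"
  by unfold_locales
    (auto simp: Cset_def eqC_def Gam1_apply alph_apply esmul_def intro: continuous_on_mult)

lemma unop_compatible_estar: "unop_compatible d xs (\<lambda>_. estar)"
  by unfold_locales
    (auto simp: Cset_def eqC_def Gam1_apply alph_apply estar_def madj_def intro: continuous_on_cnj)

end

theorem mainTheorem3:
  fixes d :: "nat \<Rightarrow> nat" and xs :: "nat \<Rightarrow> pt"
  assumes d0: "d 0 = 1"
    and dgt: "\<forall>n\<ge>1. d n > 2 ^ (n - 1)"
    and kap: "kappa d > 1 / 2"
    and xsX: "\<forall>m. xs m \<in> Xsp d m"
    and dens: "\<forall>n. Xsp d n \<subseteq> closure (dense_pts d xs n)"
  shows "(\<forall>n. \<forall>f\<in>Cset d n.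
            eqC d (Suc n) (alph d (Suc n) (Gam1 d xs n f)) (Gam1 d xs n (alph d n f)))
       \<and> (\<exists>\<alpha>. bij_betw \<alpha> (Clim d xs) (Clim d xs)
            \<and> (\<forall>n. \<forall>f\<in>Cset d n. \<alpha> (Ginf d xs n f) = Ginf d xs n (alph d n f))
            \<and> (\<forall>A\<in>Clim d xs. \<forall>B\<in>Clim d xs.
                 \<alpha> (cadd d xs A B) = cadd d xs (\<alpha> A) (\<alpha> B)
               \<and> \<alpha> (cmul d xs A B) = cmul d xs (\<alpha> A) (\<alpha> B))
            \<and> (\<forall>c. \<forall>A\<in>Clim d xs. \<alpha> (csmul d xs c A) = csmul d xs c (\<alpha> A))
            \<and> (\<forall>A\<in>Clim d xs. \<alpha> (cstar d xs A) = cstar d xs (\<alpha> A)))"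
proof -
  interpret inductive_system d xs
    using xsX by (simp add: inductive_system_def)
  show ?thesis
  proof (intro conjI exI[of _ alph_lim] allI ballI)
    show "bij_betw alph_lim (Clim d xs) (Clim d xs)"
      by (rule bij_betw_alph_lim)
  qed (simp_all add: alph_Gam1_eqC alph_lim_Ginf cadd_eq_lim_binop cmul_eq_lim_binop
      csmul_eq_lim_unop cstar_eq_lim_unop
      binop_compatible.alph_lim_lim_binop[OF binop_compatible_eadd]
      binop_compatible.alph_lim_lim_binop[OF binop_compatible_emul]
      unop_compatible.alph_lim_lim_unop[OF unop_compatible_esmul]
      unop_compatible.alph_lim_lim_unop[OF unop_compatible_estar])
qed

end
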